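(* Let $f:\mathbb Z^2_e\to\mathbb P^3$ and $G:\mathbb Z^2_o\to\{\text{planes in }\mathbb P^3\}$ be generic, and consider the tiling of the plane by the square lattice graph on $\mathbb Z^2$ (edges between lattice-adjacent points, faces the unit squares), with vertex $(i,j)\in\mathbb Z^2_e$ white and labeled by the point $f_{i,j}$, and vertex $(i,j)\in\mathbb Z^2_o$ black and labeled by the plane $G_{i,j}$. Then: (V) the labels of the neighbors of each vertex form a circuit if and only if $f$ is a $Q$-net and $G$ is a $Q^*$-net; and, assuming this, (F) every unit-square face is coherent if and only if $f$ and $g$ are $F$-transforms of each other, where $g:\mathbb Z^2_e\to\mathbb P^3$ is given by $g_{i,j}=G_{i-1,j}\cap G_{i,j-1}\cap G_{i+1,j}\cap G_{i,j+1}$.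
   Context: $\mathbb Z^2_e=\{(i,j): i+j\text{ even}\}$, $\mathbb Z^2_o=\{(i,j): i+j\text{ odd}\}$. A map $f$ from $\mathbb Z^2_e$ (resp. $\mathbb Z^2_o$) to $\mathbb P^3$ is a $Q$-net if for every $(i,j)\in\mathbb Z^2_o$ (resp. $\mathbb Z^2_e$) the four points $f_{i\pm1,j},f_{i,j\pm1}$ are coplanar. A $Q^*$-net is the dual notion: a map to planes such that the four planes $G_{i\pm1,j},G_{i,j\pm1}$ share a common point. Two $Q$-nets $f,g$ with the same domain are $F$-transforms of each other if for every $(i,j)$ in the domain and each sign the four points $f_{i,j},g_{i,j},f_{i+1,j\pm1},g_{i+1,j\pm1}$ are coplanar. A circuit is a linearly dependent set of points (or planes, viewed in the dual space) all of whose proper subsets are independent. A face with vertices labeled by points $A_1,\dots,A_n$ and planes $\ell_1,\dots,\ell_n$ in cyclic (clockwise) order is coherent if the multi-ratio $\frac{\boldsymbol\ell_1(\mathbf A_1)\cdots\boldsymbol\ell_n(\mathbf A_n)}{\boldsymbol\ell_1(\mathbf A_2)\cdots\boldsymbol\ell_n(\mathbf A_1)}$ of lifts to vectors/covectors of $\mathbb C^4$ equals $1$; for a quadrilateral with points $A,B$ and planes $c,d$ this holds iff $A=B$, or $c=d$, or the line $AB$ meets the line $c\cap d$. Generic means all labels are distinct and in general position apart from the imposed conditions. *)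

theory Defs
  imports "HOL-Analysis.Analysis"
begin

text \<open>A point of P^3 is represented by a
  (nonzero) lift in complex^4, a plane by a (nonzero) covector, also stored in complex^4.
  All notions below are invariant under rescaling of lifts.\<close>

type_synonym vec4 = "complex ^ 4"

definition pair :: "vec4 \<Rightarrow> vec4 \<Rightarrow> complex" where
  "pair l x = (\<Sum>k\<in>UNIV. l $ k * x $ k)"

definition dep_on :: "vec4 list \<Rightarrow> nat set \<Rightarrow> bool" where
  "dep_on vs S \<longleftrightarrow> (\<exists>c. (\<exists>k\<in>S. c k \<noteq> 0) \<and> (\<Sum>k\<in>S. c k *s (vs ! k)) = 0)"

definition dependent_list :: "vec4 list \<Rightarrow> bool" where
  "dependent_list vs \<longleftrightarrow> dep_on vs {..<length vs}"

definition circuit :: "vec4 list \<Rightarrow> bool" where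
  "circuit vs \<longleftrightarrow> dep_on vs {..<length vs} \<and> (\<forall>S. S \<subset> {..<length vs} \<longrightarrow> \<not> dep_on vs S)"

definition coplanar :: "vec4 list \<Rightarrow> bool" where
  "coplanar ps \<longleftrightarrow> (\<exists>l. l \<noteq> 0 \<and> (\<forall>p\<in>set ps. pair l p = 0))"

definition concurrent :: "vec4 list \<Rightarrow> bool" where
  "concurrent ls \<longleftrightarrow> (\<exists>x. x \<noteq> 0 \<and> (\<forall>l\<in>set ls. pair l x = 0))"

definition even_v :: "int \<times> int \<Rightarrow> bool" where
  "even_v p \<longleftrightarrow> even (fst p + snd p)"

definition nbrs :: "int \<times> int \<Rightarrow> (int \<times> int) list" where
  "nbrs p = (case p of (i, j) \<Rightarrow> [(i - 1, j), (i + 1, j), (i, j - 1), (i, j + 1)])"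

definition Q_net :: "(int \<times> int \<Rightarrow> vec4) \<Rightarrow> bool" where
  "Q_net f \<longleftrightarrow> (\<forall>p. \<not> even_v p \<longrightarrow> coplanar (map f (nbrs p)))"

definition Qstar_net :: "(int \<times> int \<Rightarrow> vec4) \<Rightarrow> bool" where
  "Qstar_net G \<longleftrightarrow> (\<forall>p. even_v p \<longrightarrow> concurrent (map G (nbrs p)))"

definition F_transforms :: "(int \<times> int \<Rightarrow> vec4) \<Rightarrow> (int \<times> int \<Rightarrow> vec4) \<Rightarrow> bool" where
  "F_transforms f g \<longleftrightarrow> (\<forall>i j. even (i + j) \<longrightarrow> (\<forall>s\<in>{1, -1::int}.
      coplanar [f (i, j), g (i, j), f (i + 1, j + s), g (i + 1, j + s)]))"

text \<open>Multi-ratio of a face with points A_1..A_n and planes l_1..l_n in cyclic clockwise order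
  (A_1, l_1, A_2, l_2, ...).\<close>
definition multi_ratio :: "vec4 list \<Rightarrow> vec4 list \<Rightarrow> complex" where
  "multi_ratio As ls = (let n = length As in
     (\<Prod>k<n. pair (ls ! k) (As ! k)) / (\<Prod>k<n. pair (ls ! k) (As ! ((k + 1) mod n))))"

definition coherent :: "vec4 list \<Rightarrow> vec4 list \<Rightarrow> bool" where
  "coherent As ls \<longleftrightarrow> multi_ratio As ls = 1"

text \<open>The unit square with lower-left corner (i,j); clockwise order of its vertices is
  (i,j), (i,j+1), (i+1,j+1), (i+1,j). White vertices carry f, black ones G.\<close>
definition face_coherent :: "(int \<times> int \<Rightarrow> vec4) \<Rightarrow> (int \<times> int \<Rightarrow> vec4) \<Rightarrow> int \<Rightarrow> int \<Rightarrow> bool" where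
  "face_coherent f G i j \<longleftrightarrow>
     (if even (i + j)
      then coherent [f (i, j), f (i + 1, j + 1)] [G (i, j + 1), G (i + 1, j)]
      else coherent [f (i, j + 1), f (i + 1, j)] [G (i + 1, j + 1), G (i, j)])"

text \<open>Genericity: labels nonzero and pairwise distinct (as projective objects); the labels of
  the neighbours of any vertex in general position (any three independent); no point lies on
  an adjacent plane; and no point lies on all the neighbour planes of two distinct white
  vertices (general position of the planes beyond the imposed concurrency).\<close>
definition generic :: "(int \<times> int \<Rightarrow> vec4) \<Rightarrow> (int \<times> int \<Rightarrow> vec4) \<Rightarrow> bool" where
  "generic f G \<longleftrightarrow>
     (\<forall>p. even_v p \<longrightarrow> f p \<noteq> 0) \<and> (\<forall>p. \<not> even_v p \<longrightarrow> G p \<noteq> 0) \<and>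
     (\<forall>p q. even_v p \<and> even_v q \<and> p \<noteq> q \<longrightarrow> \<not> dependent_list [f p, f q]) \<and>
     (\<forall>p q. \<not> even_v p \<and> \<not> even_v q \<and> p \<noteq> q \<longrightarrow> \<not> dependent_list [G p, G q]) \<and>
     (\<forall>p. \<not> even_v p \<longrightarrow> (\<forall>S. S \<subseteq> {..<4} \<and> card S = 3 \<longrightarrow> \<not> dep_on (map f (nbrs p)) S)) \<and>
     (\<forall>p. even_v p \<longrightarrow> (\<forall>S. S \<subseteq> {..<4} \<and> card S = 3 \<longrightarrow> \<not> dep_on (map G (nbrs p)) S)) \<and>
     (\<forall>p. even_v p \<longrightarrow> (\<forall>q\<in>set (nbrs p). pair (G q) (f p) \<noteq> 0)) \<and>
     (\<forall>p q. even_v p \<and> even_v q \<and> p \<noteq> q \<longrightarrow> \<not> concurrent (map G (nbrs p @ nbrs q)))"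

end

theory Submission
  imports Defs
begin

(* At a white vertex the four neighbouring planes are, by genericity, independent three at a
   time, so they form a circuit exactly when the four covectors are linearly dependent, which in
   dimension four means that they have a common point; dually, four points at a black vertex form
   a circuit exactly when they are coplanar.

   For a face with white corners p, q and black corners a, b the multi-ratio equals 1 iff
   <G a, f p> <G b, f q> = <G a, f q> <G b, f p>, i.e. iff the plane <G b, f p> G a - <G a, f p> G b
   of the pencil through the line L = G a meet G b, which contains f p, also contains f q. Both g p and
   g q lie on all four planes around p resp. q, hence on L, and genericity makes them distinct, so
   they span L. Hence the face is coherent iff f p, g p, f q, g q are coplanar, which is the
   F-transform condition along the diagonal pq of the face. *)

lemma left_kernel_nontrivial_iff_kernel_nontrivial:
  fixes A :: "'a::field^'n^'n"
  shows "(\<exists>y. y \<noteq> 0 \<and> y v* A = 0) \<longleftrightarrow> (\<exists>x. x \<noteq> 0 \<and> A *v x = 0)"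
proof -
  have "(\<forall>y. y v* A = 0 \<longrightarrow> y = 0) \<longleftrightarrow> (\<exists>B. B ** transpose A = mat 1)"
    by (simp add: matrix_left_invertible_ker)
  also have "\<dots> \<longleftrightarrow> (\<exists>B. B ** A = mat 1)"
    by (simp add: left_invertible_transpose matrix_left_right_inverse)
  also have "\<dots> \<longleftrightarrow> (\<forall>x. A *v x = 0 \<longrightarrow> x = 0)"
    by (rule matrix_left_invertible_ker)
  finally show ?thesis by blast
qed

lemma pair_commute: "pair l x = pair x l"
  by (simp add: pair_def mult.commute)

lemma pair_add_right [simp]: "pair l (x + y) = pair l x + pair l y"
  by (simp add: pair_def distrib_left sum.distrib)

lemma pair_scale_right [simp]: "pair l (c *s x) = c * pair l x"
  by (simp add: pair_def sum_distrib_left algebra_simps)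

lemma pair_zero_right [simp]: "pair l 0 = 0"
  by (simp add: pair_def)

lemma pair_diff_left [simp]: "pair (l - m) x = pair l x - pair m x"
  by (simp add: pair_def sum_subtractf left_diff_distrib)

lemma pair_scale_left [simp]: "pair (c *s l) x = c * pair l x"
  by (simp add: pair_commute[of _ x])

lemma ex_vec4_iff: "(\<exists>y::'a^4. P (y$1) (y$2) (y$3) (y$4)) \<longleftrightarrow> (\<exists>a b c d. P a b c d)"
proof
  assume "\<exists>a b c d. P a b c d"
  then obtain a b c d where "P a b c d" by blast
  then show "\<exists>y::'a^4. P (y$1) (y$2) (y$3) (y$4)"
    by (intro exI[of _ "\<chi> i. if i = 1 then a else if i = 2 then b else if i = 3 then c else d"]) simp
qed blast

lemma four_vectors_dependent_iff_common_annihilator: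
  fixes v0 v1 v2 v3 :: vec4
  shows "(\<exists>c0 c1 c2 c3. (c0 \<noteq> 0 \<or> c1 \<noteq> 0 \<or> c2 \<noteq> 0 \<or> c3 \<noteq> 0) \<and>
            c0 *s v0 + c1 *s v1 + c2 *s v2 + c3 *s v3 = 0)
      \<longleftrightarrow> (\<exists>x. x \<noteq> 0 \<and> pair v0 x = 0 \<and> pair v1 x = 0 \<and> pair v2 x = 0 \<and> pair v3 x = 0)"
proof -
  define M :: "complex^4^4" where
    "M = (\<chi> i. if i = 1 then v0 else if i = 2 then v1 else if i = 3 then v2 else v3)"
  have rows: "M $ 1 = v0" "M $ 2 = v1" "M $ 3 = v2" "M $ 4 = v3"
    by (simp_all add: M_def)
  have "y v* M = y$1 *s v0 + y$2 *s v1 + y$3 *s v2 + y$4 *s v3" for y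
    by (simp add: vec_eq_iff vector_matrix_mult_def sum_4 rows[symmetric] mult.commute)
  moreover have "y \<noteq> 0 \<longleftrightarrow> y$1 \<noteq> 0 \<or> y$2 \<noteq> 0 \<or> y$3 \<noteq> 0 \<or> y$4 \<noteq> 0" for y :: "complex^4"
    by (simp add: vec_eq_iff forall_4)
  ultimately have "(\<exists>y. y \<noteq> 0 \<and> y v* M = 0) \<longleftrightarrow>
     (\<exists>c0 c1 c2 c3. (c0 \<noteq> 0 \<or> c1 \<noteq> 0 \<or> c2 \<noteq> 0 \<or> c3 \<noteq> 0) \<and>
            c0 *s v0 + c1 *s v1 + c2 *s v2 + c3 *s v3 = 0)"
    using ex_vec4_iff[of "\<lambda>c0 c1 c2 c3. (c0 \<noteq> 0 \<or> c1 \<noteq> 0 \<or> c2 \<noteq> 0 \<or> c3 \<noteq> 0) \<and>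
            c0 *s v0 + c1 *s v1 + c2 *s v2 + c3 *s v3 = 0"] by simp
  moreover have "M *v x = 0 \<longleftrightarrow> pair v0 x = 0 \<and> pair v1 x = 0 \<and> pair v2 x = 0 \<and> pair v3 x = 0" for x
    by (simp add: vec_eq_iff forall_4 matrix_vector_mult_def pair_def rows[symmetric])
  ultimately show ?thesis
    using left_kernel_nontrivial_iff_kernel_nontrivial[of M] by simp
qed

lemma dep_on_four_iff:
  "dep_on [v0, v1, v2, v3] {..<4} \<longleftrightarrow>
     (\<exists>c0 c1 c2 c3. (c0 \<noteq> 0 \<or> c1 \<noteq> 0 \<or> c2 \<noteq> 0 \<or> c3 \<noteq> 0) \<and>
        c0 *s v0 + c1 *s v1 + c2 *s v2 + c3 *s v3 = 0)"
  (is "_ \<longleftrightarrow> (\<exists>c0 c1 c2 c3. ?dep c0 c1 c2 c3)")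
proof -
  have four: "{..<4::nat} = {0, 1, 2, 3}" by auto
  show ?thesis
    unfolding dep_on_def four
  proof
    assume "\<exists>c. (\<exists>k\<in>{0, 1, 2, 3}. c k \<noteq> 0) \<and> (\<Sum>k\<in>{0, 1, 2, 3}. c k *s [v0, v1, v2, v3] ! k) = 0"
    then obtain c where "(\<exists>k\<in>{0, 1, 2, 3}. c k \<noteq> 0)" "(\<Sum>k\<in>{0, 1, 2, 3}. c k *s [v0, v1, v2, v3] ! k) = 0"
      by blast
    then have "?dep (c 0) (c 1) (c 2) (c 3)" by (auto simp: add.assoc)
    then show "\<exists>c0 c1 c2 c3. ?dep c0 c1 c2 c3" by blast
  next
    assume "\<exists>c0 c1 c2 c3. ?dep c0 c1 c2 c3"
    then obtain c0 c1 c2 c3 where "?dep c0 c1 c2 c3" by blast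
    then show "\<exists>c. (\<exists>k\<in>{0, 1, 2, 3}. c k \<noteq> 0) \<and> (\<Sum>k\<in>{0, 1, 2, 3}. c k *s [v0, v1, v2, v3] ! k) = 0"
      by (intro exI[of _ "(!) [c0, c1, c2, c3]"]) (auto simp: add.assoc)
  qed
qed

lemma coplanar_iff_common_annihilator: "coplanar ps \<longleftrightarrow> (\<exists>x. x \<noteq> 0 \<and> (\<forall>p\<in>set ps. pair p x = 0))"
  by (simp add: coplanar_def pair_commute)

lemma coplanar_four_iff:
  "coplanar [v0, v1, v2, v3] \<longleftrightarrow>
     (\<exists>c0 c1 c2 c3. (c0 \<noteq> 0 \<or> c1 \<noteq> 0 \<or> c2 \<noteq> 0 \<or> c3 \<noteq> 0) \<and>
        c0 *s v0 + c1 *s v1 + c2 *s v2 + c3 *s v3 = 0)"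
  unfolding four_vectors_dependent_iff_common_annihilator coplanar_iff_common_annihilator by simp

lemma concurrent_four_iff:
  "concurrent [l0, l1, l2, l3] \<longleftrightarrow>
     (\<exists>c0 c1 c2 c3. (c0 \<noteq> 0 \<or> c1 \<noteq> 0 \<or> c2 \<noteq> 0 \<or> c3 \<noteq> 0) \<and>
        c0 *s l0 + c1 *s l1 + c2 *s l2 + c3 *s l3 = 0)"
  unfolding four_vectors_dependent_iff_common_annihilator concurrent_def by simp

lemma dep_on_mono:
  assumes "dep_on vs S" "S \<subseteq> T" "finite T"
  shows "dep_on vs T"
proof -
  obtain c where c: "\<exists>k\<in>S. c k \<noteq> 0" "(\<Sum>k\<in>S. c k *s (vs ! k)) = 0"
    using assms(1) unfolding dep_on_def by blast
  define d where "d k = (if k \<in> S then c k else 0)" for k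
  have "(\<Sum>k\<in>T. d k *s (vs ! k)) = (\<Sum>k\<in>S. c k *s (vs ! k))"
    using assms(2,3) by (intro sum.mono_neutral_cong_right) (auto simp: d_def)
  moreover have "\<exists>k\<in>T. d k \<noteq> 0" using c(1) assms(2) by (auto simp: d_def)
  ultimately show ?thesis
    using c(2) unfolding dep_on_def by metis
qed

lemma circuit_iff_dep_on:
  assumes "\<And>S. S \<subseteq> {..<length vs} \<Longrightarrow> card S = length vs - 1 \<Longrightarrow> \<not> dep_on vs S"
  shows "circuit vs \<longleftrightarrow> dep_on vs {..<length vs}"
proof -
  have "\<not> dep_on vs S" if "S \<subset> {..<length vs}" for S
  proof
    assume "dep_on vs S"
    obtain k where k: "k < length vs" "k \<notin> S" using \<open>S \<subset> {..<length vs}\<close> by blast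
    have "S \<subseteq> {..<length vs} - {k}" using that k by blast
    then have "dep_on vs ({..<length vs} - {k})" using \<open>dep_on vs S\<close> dep_on_mono by blast
    moreover have "card ({..<length vs} - {k}) = length vs - 1" using k by simp
    ultimately show False using assms[of "{..<length vs} - {k}"] by blast
  qed
  then show ?thesis unfolding circuit_def by blast
qed

lemma dependent_list_two_iff:
  "dependent_list [x, y] \<longleftrightarrow> (\<exists>a b. (a \<noteq> 0 \<or> b \<noteq> 0) \<and> a *s x + b *s y = 0)"
proof -
  have two: "{..<length [x, y]} = {0, 1}" by auto
  show ?thesis
    unfolding dependent_list_def dep_on_def two
  proof
    assume "\<exists>c. (\<exists>k\<in>{0, 1}. c k \<noteq> 0) \<and> (\<Sum>k\<in>{0, 1}. c k *s [x, y] ! k) = 0"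
    then obtain c where "\<exists>k\<in>{0, 1}. c k \<noteq> 0" "(\<Sum>k\<in>{0, 1}. c k *s [x, y] ! k) = 0"
      by blast
    then show "\<exists>a b. (a \<noteq> 0 \<or> b \<noteq> 0) \<and> a *s x + b *s y = 0"
      by (intro exI[of _ "c 0"] exI[of _ "c 1"]) auto
  next
    assume "\<exists>a b. (a \<noteq> 0 \<or> b \<noteq> 0) \<and> a *s x + b *s y = 0"
    then obtain a b where "a \<noteq> 0 \<or> b \<noteq> 0" "a *s x + b *s y = 0" by blast
    then show "\<exists>c. (\<exists>k\<in>{0, 1}. c k \<noteq> 0) \<and> (\<Sum>k\<in>{0, 1}. c k *s [x, y] ! k) = 0"
      by (intro exI[of _ "(!) [a, b]"]) auto
  qed
qed

lemma coherent_two_iff: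
  assumes "pair l0 A1 \<noteq> 0" "pair l1 A0 \<noteq> 0"
  shows "coherent [A0, A1] [l0, l1] \<longleftrightarrow> pair l0 A0 * pair l1 A1 = pair l0 A1 * pair l1 A0"
  using assms by (simp add: coherent_def multi_ratio_def numeral_2_eq_2 lessThan_Suc mult.commute)

lemma coherent_two_iff_coplanar:
  assumes planes: "\<not> dependent_list [l0, l1]"
    and line: "\<not> dependent_list [P, Q]"
    and on_line: "pair l0 P = 0" "pair l1 P = 0" "pair l0 Q = 0" "pair l1 Q = 0"
    and off: "pair l0 A1 \<noteq> 0" "pair l1 A0 \<noteq> 0"
  shows "coherent [A0, A1] [l0, l1] \<longleftrightarrow> coplanar [A0, P, A1, Q]"
proof -
  have "pair l0 A0 * pair l1 A1 = pair l0 A1 * pair l1 A0 \<longleftrightarrow> coplanar [A0, P, A1, Q]"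
  proof
    assume cross: "pair l0 A0 * pair l1 A1 = pair l0 A1 * pair l1 A0"
    define l where "l = pair l1 A0 *s l0 + (- pair l0 A0) *s l1"
    have "l \<noteq> 0"
      using planes off(2) unfolding dependent_list_two_iff l_def by blast
    moreover have "\<forall>p\<in>set [A0, P, A1, Q]. pair l p = 0"
      using on_line cross by (simp add: l_def algebra_simps)
    ultimately show "coplanar [A0, P, A1, Q]"
      unfolding coplanar_def by blast
  next
    assume "coplanar [A0, P, A1, Q]"
    then obtain c0 c1 c2 c3 where c: "c0 \<noteq> 0 \<or> c1 \<noteq> 0 \<or> c2 \<noteq> 0 \<or> c3 \<noteq> 0"
        "c0 *s A0 + c1 *s P + c2 *s A1 + c3 *s Q = 0"
      unfolding coplanar_four_iff by blast
    have e0: "c0 * pair l0 A0 + c2 * pair l0 A1 = 0"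
      using arg_cong[OF c(2), of "pair l0"] on_line by simp
    have e1: "c0 * pair l1 A0 + c2 * pair l1 A1 = 0"
      using arg_cong[OF c(2), of "pair l1"] on_line by simp
    show "pair l0 A0 * pair l1 A1 = pair l0 A1 * pair l1 A0"
    proof (rule ccontr)
      assume "pair l0 A0 * pair l1 A1 \<noteq> pair l0 A1 * pair l1 A0"
      moreover have "c0 * (pair l0 A0 * pair l1 A1 - pair l0 A1 * pair l1 A0) =
          pair l1 A1 * (c0 * pair l0 A0 + c2 * pair l0 A1) - pair l0 A1 * (c0 * pair l1 A0 + c2 * pair l1 A1)"
        by (simp add: algebra_simps)
      ultimately have "c0 = 0" using e0 e1 by simp
      moreover have "c2 = 0" using e0 off(1) \<open>c0 = 0\<close> by simp
      ultimately show False
        using c line unfolding dependent_list_two_iff by auto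
    qed
  qed
  then show ?thesis using coherent_two_iff[OF off] by simp
qed

lemma map_nbrs: "map h (nbrs (i, j)) = [h (i - 1, j), h (i + 1, j), h (i, j - 1), h (i, j + 1)]"
  by (simp add: nbrs_def)

lemma length_map_nbrs: "length (map h (nbrs p)) = 4"
  by (cases p) (simp add: map_nbrs)

lemma
  assumes "generic f G"
  shows generic_white_star_independent:
      "\<not> even_v p \<Longrightarrow> S \<subseteq> {..<4} \<Longrightarrow> card S = 3 \<Longrightarrow> \<not> dep_on (map f (nbrs p)) S"
    and generic_black_star_independent:
      "even_v p \<Longrightarrow> S \<subseteq> {..<4} \<Longrightarrow> card S = 3 \<Longrightarrow> \<not> dep_on (map G (nbrs p)) S"
    and generic_black_labels_independent:
      "\<not> even_v a \<Longrightarrow> \<not> even_v b \<Longrightarrow> a \<noteq> b \<Longrightarrow> \<not> dependent_list [G a, G b]"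
    and generic_point_off_adjacent_plane:
      "even_v p \<Longrightarrow> q \<in> set (nbrs p) \<Longrightarrow> pair (G q) (f p) \<noteq> 0"
    and generic_two_stars_not_concurrent:
      "even_v p \<Longrightarrow> even_v q \<Longrightarrow> p \<noteq> q \<Longrightarrow> \<not> concurrent (map G (nbrs p @ nbrs q))"
  using assms unfolding generic_def by metis+

lemma generic_circuit_iff_concurrent:
  assumes "generic f G" "even_v p"
  shows "circuit (map G (nbrs p)) \<longleftrightarrow> concurrent (map G (nbrs p))"
proof -
  have "circuit (map G (nbrs p)) \<longleftrightarrow> dep_on (map G (nbrs p)) {..<4}"
    using circuit_iff_dep_on[of "map G (nbrs p)"] generic_black_star_independent[OF assms]
    unfolding length_map_nbrs by simp
  also have "\<dots> \<longleftrightarrow> concurrent (map G (nbrs p))"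
    by (cases p) (simp only: map_nbrs dep_on_four_iff concurrent_four_iff)
  finally show ?thesis .
qed

lemma generic_circuit_iff_coplanar:
  assumes "generic f G" "\<not> even_v p"
  shows "circuit (map f (nbrs p)) \<longleftrightarrow> coplanar (map f (nbrs p))"
proof -
  have "circuit (map f (nbrs p)) \<longleftrightarrow> dep_on (map f (nbrs p)) {..<4}"
    using circuit_iff_dep_on[of "map f (nbrs p)"] generic_white_star_independent[OF assms]
    unfolding length_map_nbrs by simp
  also have "\<dots> \<longleftrightarrow> coplanar (map f (nbrs p))"
    by (cases p) (simp only: map_nbrs dep_on_four_iff coplanar_four_iff)
  finally show ?thesis .
qed

lemma generic_circuits_iff_Q_net_Qstar_net:
  assumes "generic f G"
  shows "(\<forall>p. if even_v p then circuit (map G (nbrs p)) else circuit (map f (nbrs p)))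
    \<longleftrightarrow> Q_net f \<and> Qstar_net G"
proof -
  have "(if even_v p then circuit (map G (nbrs p)) else circuit (map f (nbrs p))) \<longleftrightarrow>
      (even_v p \<longrightarrow> concurrent (map G (nbrs p))) \<and> (\<not> even_v p \<longrightarrow> coplanar (map f (nbrs p)))" for p
    using generic_circuit_iff_concurrent[OF assms] generic_circuit_iff_coplanar[OF assms] by simp
  then show ?thesis unfolding Q_net_def Qstar_net_def by blast
qed

lemma generic_intersection_points_independent:
  assumes gen: "generic f G"
    and g: "\<forall>p. even_v p \<longrightarrow> g p \<noteq> 0 \<and> (\<forall>q\<in>set (nbrs p). pair (G q) (g p) = 0)"
    and pq: "even_v p" "even_v q" "p \<noteq> q"
  shows "\<not> dependent_list [g p, g q]"
proof
  assume "dependent_list [g p, g q]"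
  then obtain a b where ab: "a \<noteq> 0 \<or> b \<noteq> 0" "a *s g p + b *s g q = 0"
    unfolding dependent_list_two_iff by blast
  have "g p \<noteq> 0" "g q \<noteq> 0" using g pq by blast+
  then have "a \<noteq> 0" using ab by auto
  have "pair (G r) (g p) = 0" if "r \<in> set (nbrs q)" for r
  proof -
    have "a * pair (G r) (g p) + b * pair (G r) (g q) = 0"
      using arg_cong[OF ab(2), of "pair (G r)"] by simp
    then show ?thesis using g pq(2) that \<open>a \<noteq> 0\<close> by simp
  qed
  moreover have "pair (G r) (g p) = 0" if "r \<in> set (nbrs p)" for r
    using g pq(1) that by blast
  ultimately have "concurrent (map G (nbrs p @ nbrs q))"
    unfolding concurrent_def using \<open>g p \<noteq> 0\<close> by (intro exI[of _ "g p"]) auto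
  then show False using generic_two_stars_not_concurrent[OF gen pq] by blast
qed

lemma generic_coherent_iff_coplanar:
  assumes gen: "generic f G"
    and g: "\<forall>p. even_v p \<longrightarrow> g p \<noteq> 0 \<and> (\<forall>q\<in>set (nbrs p). pair (G q) (g p) = 0)"
    and white: "even_v p" "even_v q" "p \<noteq> q"
    and black: "\<not> even_v a" "\<not> even_v b" "a \<noteq> b"
    and adjacent: "a \<in> set (nbrs p)" "a \<in> set (nbrs q)" "b \<in> set (nbrs p)" "b \<in> set (nbrs q)"
  shows "coherent [f p, f q] [G a, G b] \<longleftrightarrow> coplanar [f p, g p, f q, g q]"
proof (rule coherent_two_iff_coplanar)
  show "\<not> dependent_list [G a, G b]"
    using generic_black_labels_independent[OF gen black] .
  show "\<not> dependent_list [g p, g q]"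
    using generic_intersection_points_independent[OF gen g white] .
  show "pair (G a) (g p) = 0" "pair (G b) (g p) = 0" "pair (G a) (g q) = 0" "pair (G b) (g q) = 0"
    using g white adjacent by blast+
  show "pair (G a) (f q) \<noteq> 0" "pair (G b) (f p) \<noteq> 0"
    using generic_point_off_adjacent_plane[OF gen] white adjacent by blast+
qed

lemma generic_face_coherent_iff_coplanar:
  assumes gen: "generic f G"
    and g: "\<forall>p. even_v p \<longrightarrow> g p \<noteq> 0 \<and> (\<forall>q\<in>set (nbrs p). pair (G q) (g p) = 0)"
  shows "face_coherent f G i j \<longleftrightarrow>
    (if even (i + j) then coplanar [f (i, j), g (i, j), f (i + 1, j + 1), g (i + 1, j + 1)]
     else coplanar [f (i, j + 1), g (i, j + 1), f (i + 1, j), g (i + 1, j)])"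
proof (cases "even (i + j)")
  case True
  then have "coherent [f (i, j), f (i + 1, j + 1)] [G (i, j + 1), G (i + 1, j)] \<longleftrightarrow>
      coplanar [f (i, j), g (i, j), f (i + 1, j + 1), g (i + 1, j + 1)]"
    by (intro generic_coherent_iff_coplanar[OF gen g]) (auto simp: even_v_def nbrs_def)
  then show ?thesis using True by (simp add: face_coherent_def)
next
  case False
  then have "coherent [f (i, j + 1), f (i + 1, j)] [G (i + 1, j + 1), G (i, j)] \<longleftrightarrow>
      coplanar [f (i, j + 1), g (i, j + 1), f (i + 1, j), g (i + 1, j)]"
    by (intro generic_coherent_iff_coplanar[OF gen g]) (auto simp: even_v_def nbrs_def)
  then show ?thesis using False by (simp add: face_coherent_def)
qed

lemma generic_faces_coherent_iff_F_transforms: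
  assumes gen: "generic f G"
    and g: "\<forall>p. even_v p \<longrightarrow> g p \<noteq> 0 \<and> (\<forall>q\<in>set (nbrs p). pair (G q) (g p) = 0)"
  shows "(\<forall>i j. face_coherent f G i j) \<longleftrightarrow> F_transforms f g"
proof
  assume faces: "\<forall>i j. face_coherent f G i j"
  show "F_transforms f g"
    unfolding F_transforms_def
  proof (intro allI impI ballI)
    fix i j s :: int
    assume "even (i + j)" "s \<in> {1, -1}"
    then show "coplanar [f (i, j), g (i, j), f (i + 1, j + s), g (i + 1, j + s)]"
      using faces[rule_format, of i j] faces[rule_format, of i "j - 1"]
      by (auto simp: generic_face_coherent_iff_coplanar[OF gen g])
  qed
next
  assume F: "F_transforms f g"
  show "\<forall>i j. face_coherent f G i j"
  proof (intro allI)
    fix i j :: int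
    show "face_coherent f G i j"
      using F[unfolded F_transforms_def, rule_format, of i j 1]
        F[unfolded F_transforms_def, rule_format, of i "j + 1" "-1"]
      by (auto simp: generic_face_coherent_iff_coplanar[OF gen g])
  qed
qed

theorem mainTheorem8:
  fixes f G :: "int \<times> int \<Rightarrow> complex ^ 4"
  assumes gen: "generic f G"
  shows "((\<forall>p. if even_v p then circuit (map G (nbrs p)) else circuit (map f (nbrs p)))
            \<longleftrightarrow> Q_net f \<and> Qstar_net G)
       \<and> (Q_net f \<and> Qstar_net G \<longrightarrow>
            (\<forall>g :: int \<times> int \<Rightarrow> complex ^ 4.
               (\<forall>p. even_v p \<longrightarrow> g p \<noteq> 0 \<and> (\<forall>q\<in>set (nbrs p). pair (G q) (g p) = 0)) \<longrightarrow>
               ((\<forall>i j. face_coherent f G i j) \<longleftrightarrow> F_transforms f g)))"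
proof (intro conjI impI allI)
  show "(\<forall>p. if even_v p then circuit (map G (nbrs p)) else circuit (map f (nbrs p)))
      \<longleftrightarrow> Q_net f \<and> Qstar_net G"
    using gen by (rule generic_circuits_iff_Q_net_Qstar_net)
  fix g :: "int \<times> int \<Rightarrow> complex ^ 4"
  assume "\<forall>p. even_v p \<longrightarrow> g p \<noteq> 0 \<and> (\<forall>q\<in>set (nbrs p). pair (G q) (g p) = 0)"
  with gen show "(\<forall>i j. face_coherent f G i j) \<longleftrightarrow> F_transforms f g"
    by (rule generic_faces_coherent_iff_F_transforms)
qed

end
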